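(* Let $H$ be a finite connected graph (loops allowed) with at least one edge. Then $\hom(\mathbb{T}^r,H)$ has long range action for no positive integer $r$ if and only if $H$ is dismantlable.
   Context: $N(i)$ is the set of nodes adjacent to $i$ (containing $i$ iff $i$ is looped). If $i\neq j$ are nodes with $N(i)\subseteq N(j)$, the map sending $i$ to $j$ and fixing other nodes is a fold of $H$ onto $H\setminus\{i\}$; $H$ is dismantlable if some sequence of folds reduces it to a single node. $\mathbb{T}^r$ is the infinite connected cycle-free graph with all degrees $r+1$, with a fixed root site $x$; $\hom(\mathbb{T}^r,H)$ is the set of graph homomorphisms $\mathbb{T}^r\to H$. $\hom(\mathbb{T}^r,H)$ has long range action if there exist $\varphi\in\hom(\mathbb{T}^r,H)$ and a node $i$ of $H$ such that for every $n\ge1$, no $\psi\in\hom(\mathbb{T}^r,H)$ which agrees with $\varphi$ on all sites at distance $n$ from $x$ satisfies $\psi(x)=i$. *)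

theory Defs
  imports Main
begin

definition graph :: "'a set \<Rightarrow> ('a \<Rightarrow> 'a \<Rightarrow> bool) \<Rightarrow> bool" where
  "graph V E \<longleftrightarrow> (\<forall>i j. E i j \<longrightarrow> i \<in> V \<and> j \<in> V \<and> E j i)"

inductive walk :: "'a set \<Rightarrow> ('a \<Rightarrow> 'a \<Rightarrow> bool) \<Rightarrow> 'a \<Rightarrow> 'a \<Rightarrow> bool"
  for V E where
  walk_refl: "i \<in> V \<Longrightarrow> walk V E i i"
| walk_step: "walk V E i j \<Longrightarrow> E j k \<Longrightarrow> k \<in> V \<Longrightarrow> walk V E i k"

definition connected_graph :: "'a set \<Rightarrow> ('a \<Rightarrow> 'a \<Rightarrow> bool) \<Rightarrow> bool" where
  "connected_graph V E \<longleftrightarrow> V \<noteq> {} \<and> (\<forall>i\<in>V. \<forall>j\<in>V. walk V E i j)"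

definition nbhd :: "'a set \<Rightarrow> ('a \<Rightarrow> 'a \<Rightarrow> bool) \<Rightarrow> 'a \<Rightarrow> 'a set" where
  "nbhd V E i = {j \<in> V. E i j}"

text \<open>Dismantlability: a sequence of folds (each removing a node i dominated by some
  other node j, N(i) \<subseteq> N(j) in the current induced subgraph) reaching a single node.\<close>
inductive dismantlable :: "('a \<Rightarrow> 'a \<Rightarrow> bool) \<Rightarrow> 'a set \<Rightarrow> bool" for E where
  dism_single: "dismantlable E {v}"
| dism_fold: "\<lbrakk> i \<in> V; j \<in> V; i \<noteq> j; nbhd V E i \<subseteq> nbhd V E j;
               dismantlable E (V - {i}) \<rbrakk> \<Longrightarrow> dismantlable E V"

text \<open>Sites of T^r are finite words: the root is [], the root has r+1 children
  [a] with a \<le> r, and every other site xs has r children xs@[a] with a < r. This is the infinite connected cycle-free graph with all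
  degrees r+1; the root site x is []. The distance of a site from the root is its length.\<close>

definition tsite :: "nat \<Rightarrow> nat list \<Rightarrow> bool" where
  "tsite r xs \<longleftrightarrow> (xs = [] \<or> (hd xs \<le> r \<and> (\<forall>a\<in>set (tl xs). a < r)))"

definition tedge :: "nat \<Rightarrow> nat list \<Rightarrow> nat list \<Rightarrow> bool" where
  "tedge r u v \<longleftrightarrow> tsite r u \<and> tsite r v \<and> ((\<exists>a. v = u @ [a]) \<or> (\<exists>a. u = v @ [a]))"

text \<open>Graph homomorphisms T^r \<rightarrow> H (values off the sites are irrelevant).\<close>
definition is_hom :: "nat \<Rightarrow> 'a set \<Rightarrow> ('a \<Rightarrow> 'a \<Rightarrow> bool) \<Rightarrow> (nat list \<Rightarrow> 'a) \<Rightarrow> bool" where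
  "is_hom r V E \<phi> \<longleftrightarrow> (\<forall>u. tsite r u \<longrightarrow> \<phi> u \<in> V) \<and> (\<forall>u v. tedge r u v \<longrightarrow> E (\<phi> u) (\<phi> v))"

definition long_range_action :: "nat \<Rightarrow> 'a set \<Rightarrow> ('a \<Rightarrow> 'a \<Rightarrow> bool) \<Rightarrow> bool" where
  "long_range_action r V E \<longleftrightarrow>
     (\<exists>\<phi> i. is_hom r V E \<phi> \<and> i \<in> V \<and>
        (\<forall>n\<ge>1. \<not> (\<exists>\<psi>. is_hom r V E \<psi> \<and>
                       (\<forall>u. tsite r u \<and> length u = n \<longrightarrow> \<psi> u = \<phi> u) \<and> \<psi> [] = i)))"

end

theory Submission imports Defs begin

text \<open>If H is dismantlable, the folds compose to a walk in the exponential graph H^H from a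
  constant map to the identity; prefixing a walk in H from i to that constant gives maps
  g 0 = const i, g 1, ..., g N = id with g k x ~ g (k+1) y whenever x ~ y. Applying
  g |u| at every site u of depth |u| < N turns any homomorphism into one sending the root
  to i without changing it at depth N or more, so there is no long range action.

  Conversely, folding a non-dismantlable H as far as possible leaves a retract W with at
  least two nodes in which no neighbourhood contains another (W is stiff). For r = |V|
  there is a homomorphism \<phi> into W whose children at every site enumerate all
  W-neighbours of the image of that site. If \<psi> agrees with \<phi> at depth n, then, going up
  the tree, the W-neighbourhood of \<phi> u is contained in that of \<rho> (\<psi> u) for the
  retraction \<rho>, so stiffness forces \<rho> \<circ> \<psi> = \<phi> up to the root; hence \<psi> cannot send
  the root to a node of W other than \<phi> [].\<close>

lemma graph_symp: "graph V E \<Longrightarrow> symp E"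
  unfolding graph_def symp_def by blast

lemma walk_endpoints_in: "walk V E i j \<Longrightarrow> i \<in> V \<and> j \<in> V"
  by (induction rule: walk.induct) auto

subsection \<open>Walks in the exponential graph\<close>

definition adjacent_maps :: "'a set \<Rightarrow> ('a \<Rightarrow> 'a \<Rightarrow> bool) \<Rightarrow> ('a \<Rightarrow> 'a) \<Rightarrow> ('a \<Rightarrow> 'a) \<Rightarrow> bool"
  where "adjacent_maps V E g h \<longleftrightarrow> (\<forall>x\<in>V. \<forall>y\<in>V. E x y \<longrightarrow> E (g x) (h y))"

definition map_path ::
    "'a set \<Rightarrow> ('a \<Rightarrow> 'a \<Rightarrow> bool) \<Rightarrow> (nat \<Rightarrow> 'a \<Rightarrow> 'a) \<Rightarrow> nat \<Rightarrow> ('a \<Rightarrow> 'a) \<Rightarrow> ('a \<Rightarrow> 'a) \<Rightarrow> bool"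
  where "map_path V E G n g h \<longleftrightarrow>
    (\<forall>x\<in>V. G 0 x = g x \<and> G n x = h x) \<and> (\<forall>k<n. adjacent_maps V E (G k) (G (Suc k)))
    \<and> (\<forall>k. \<forall>x\<in>V. G k x \<in> V)"

lemma adjacent_maps_cong:
  "adjacent_maps V E g h \<Longrightarrow> (\<And>x. x \<in> V \<Longrightarrow> g x = g' x) \<Longrightarrow> adjacent_maps V E g' h"
  unfolding adjacent_maps_def by auto

lemma map_path_single:
  assumes "adjacent_maps V E g h" "\<And>x. x \<in> V \<Longrightarrow> g x \<in> V" "\<And>x. x \<in> V \<Longrightarrow> h x \<in> V"
  shows "map_path V E (\<lambda>k. if k = 0 then g else h) 1 g h"
  using assms unfolding map_path_def by auto

lemma map_path_append:
  assumes G1: "map_path V E G1 n1 g h" and G2: "map_path V E G2 n2 h l"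
  shows "map_path V E (\<lambda>k. if k \<le> n1 then G1 k else G2 (k - n1)) (n1 + n2) g l"
    (is "map_path V E ?G _ _ _")
proof -
  have "adjacent_maps V E (?G k) (?G (Suc k))" if "k < n1 + n2" for k
  proof (cases "k < n1")
    case True
    then show ?thesis using G1 unfolding map_path_def by simp
  next
    case False
    then have "Suc k - n1 = Suc (k - n1)" "k - n1 < n2" using that by auto
    then have "adjacent_maps V E (G2 (k - n1)) (?G (Suc k))"
      using G2 False unfolding map_path_def by simp
    then show ?thesis
      using False G1 G2 unfolding map_path_def
      by (cases "k = n1") (auto elim!: adjacent_maps_cong)
  qed
  then show ?thesis
    using G1 G2 unfolding map_path_def by auto
qed

lemma walk_imp_map_path: "walk V E i j \<Longrightarrow> \<exists>n G. map_path V E G n (\<lambda>_. i) (\<lambda>_. j)"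
proof (induction rule: walk.induct)
  case (walk_refl i)
  then show ?case by (intro exI[of _ 0] exI[of _ "\<lambda>_ _. i"]) (auto simp: map_path_def)
next
  case (walk_step i j k)
  then obtain n G where "map_path V E G n (\<lambda>_. i) (\<lambda>_. j)" by blast
  moreover have "map_path V E (\<lambda>t. if t = 0 then (\<lambda>_. j) else (\<lambda>_. k)) 1 (\<lambda>_. j) (\<lambda>_. k)"
    using walk_step walk_endpoints_in[OF walk_step(1)]
    by (intro map_path_single) (auto simp: adjacent_maps_def)
  ultimately show ?case by (blast intro: map_path_append)
qed

subsection \<open>Retractions and folds\<close>

definition retraction :: "'a set \<Rightarrow> ('a \<Rightarrow> 'a \<Rightarrow> bool) \<Rightarrow> 'a set \<Rightarrow> ('a \<Rightarrow> 'a) \<Rightarrow> bool"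
  where "retraction V E W \<rho> \<longleftrightarrow> W \<subseteq> V \<and> (\<forall>x\<in>V. \<rho> x \<in> W) \<and> (\<forall>x\<in>W. \<rho> x = x)
    \<and> (\<forall>x\<in>V. \<forall>y\<in>V. E x y \<longrightarrow> E (\<rho> x) (\<rho> y))"

lemma retraction_id: "retraction V E V id"
  unfolding retraction_def by simp

lemma retraction_trans:
  "retraction V E U \<rho> \<Longrightarrow> retraction U E W \<sigma> \<Longrightarrow> retraction V E W (\<sigma> \<circ> \<rho>)"
  unfolding retraction_def by (simp add: subset_iff)

lemma fold_retraction:
  assumes "symp E" "b \<in> V" "a \<noteq> b" and dom: "nbhd V E a \<subseteq> nbhd V E b"
  shows "retraction V E (V - {a}) (id(a := b))"
proof -
  have dom': "E b z" if "E a z" "z \<in> V" for z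
    using dom that unfolding nbhd_def by blast
  have "E ((id(a := b)) x) ((id(a := b)) y)" if "x \<in> V" "y \<in> V" "E x y" for x y
    using that dom'[of y] dom'[of x] dom'[of b] \<open>b \<in> V\<close> \<open>symp E\<close>
    by (cases "x = a"; cases "y = a") (auto dest: sympD)
  then show ?thesis
    using assms unfolding retraction_def by auto
qed

lemma fold_adjacent_id:
  "nbhd V E a \<subseteq> nbhd V E b \<Longrightarrow> adjacent_maps V E (id(a := b)) id"
  unfolding adjacent_maps_def nbhd_def by auto

lemma map_path_retraction:
  assumes "map_path W E G n g h" "retraction V E W \<rho>"
  shows "map_path V E (\<lambda>k x. G k (\<rho> x)) n (g \<circ> \<rho>) (h \<circ> \<rho>)"
  using assms unfolding map_path_def retraction_def adjacent_maps_def by (simp add: subset_iff)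

lemma dismantlable_imp_map_path:
  assumes "dismantlable E V" "symp E"
  shows "\<exists>v\<in>V. \<exists>n G. map_path V E G n (\<lambda>_. v) id"
  using assms(1)
proof (induction rule: dismantlable.induct)
  case (dism_single v)
  then show ?case by (intro bexI[of _ v] exI[of _ 0] exI[of _ "\<lambda>_ _. v"]) (auto simp: map_path_def)
next
  case (dism_fold a V b)
  then obtain v n G where v: "v \<in> V - {a}" and G: "map_path (V - {a}) E G n (\<lambda>_. v) id"
    by blast
  have \<rho>: "retraction V E (V - {a}) (id(a := b))"
    using dism_fold \<open>symp E\<close> by (intro fold_retraction) auto
  have "map_path V E (\<lambda>k x. G k ((id(a := b)) x)) n (\<lambda>_. v) (id(a := b))"
    using map_path_retraction[OF G \<rho>] by (simp add: o_def fun_upd_def)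
  moreover have "map_path V E (\<lambda>k. if k = 0 then id(a := b) else id) 1 (id(a := b)) id"
    using dism_fold by (intro map_path_single fold_adjacent_id) auto
  ultimately show ?case
    using v by (blast intro: map_path_append)
qed

subsection \<open>Homomorphisms from the tree\<close>

lemma tsite_Nil: "tsite r []"
  unfolding tsite_def by simp

lemma tsite_snoc: "tsite r u \<Longrightarrow> a < r \<Longrightarrow> tsite r (u @ [a])"
  unfolding tsite_def by (cases u) auto

lemma tsite_butlast: "tsite r (u @ [a]) \<Longrightarrow> tsite r u"
  unfolding tsite_def by (cases u) auto

lemma is_hom_snoc:
  assumes "is_hom r V E \<phi>" "tsite r (u @ [a])"
  shows "E (\<phi> u) (\<phi> (u @ [a]))" "\<phi> u \<in> V" "\<phi> (u @ [a]) \<in> V"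
  using assms tsite_butlast[OF assms(2)] unfolding is_hom_def tedge_def by auto

lemma is_homI:
  assumes "symp E" "\<And>u. tsite r u \<Longrightarrow> \<phi> u \<in> V"
    and "\<And>u a. tsite r (u @ [a]) \<Longrightarrow> E (\<phi> u) (\<phi> (u @ [a]))"
  shows "is_hom r V E \<phi>"
  using assms unfolding is_hom_def tedge_def by (auto dest: sympD)

lemma map_path_is_hom:
  assumes G: "map_path V E G N g id" and \<phi>: "is_hom r V E \<phi>" and "symp E"
  shows "is_hom r V E (\<lambda>u. G (min (length u) N) (\<phi> u))"
proof (rule is_homI[OF \<open>symp E\<close>])
  show "G (min (length u) N) (\<phi> u) \<in> V" if "tsite r u" for u
    using G \<phi> that unfolding map_path_def is_hom_def by blast
next
  fix u a assume "tsite r (u @ [a])"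
  note \<phi>u = is_hom_snoc[OF \<phi> this]
  show "E (G (min (length u) N) (\<phi> u)) (G (min (length (u @ [a])) N) (\<phi> (u @ [a])))"
  proof (cases "length u < N")
    case True
    then have "adjacent_maps V E (G (length u)) (G (Suc (length u)))"
      using G unfolding map_path_def by blast
    then show ?thesis
      using True \<phi>u unfolding adjacent_maps_def by (simp add: Suc_leI min_absorb1)
  next
    case False
    then show ?thesis
      using G \<phi>u unfolding map_path_def by (simp add: min_absorb2)
  qed
qed

lemma dismantlable_no_long_range_action:
  assumes "symp E" "connected_graph V E" "dismantlable E V"
  shows "\<not> long_range_action r V E"
proof
  assume "long_range_action r V E"
  then obtain \<phi> i where \<phi>: "is_hom r V E \<phi>" and "i \<in> V" and no_extension:
    "\<And>n. n \<ge> 1 \<Longrightarrow> \<not> (\<exists>\<psi>. is_hom r V E \<psi> \<and> (\<forall>u. tsite r u \<and> length u = n \<longrightarrow> \<psi> u = \<phi> u)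
                         \<and> \<psi> [] = i)"
    unfolding long_range_action_def by blast
  obtain v n2 G2 where "v \<in> V" and G2: "map_path V E G2 n2 (\<lambda>_. v) id"
    using dismantlable_imp_map_path assms by blast
  have "walk V E i v"
    using assms(2) \<open>i \<in> V\<close> \<open>v \<in> V\<close> unfolding connected_graph_def by blast
  then obtain n1 G1 where G1: "map_path V E G1 n1 (\<lambda>_. i) (\<lambda>_. v)"
    by (blast dest: walk_imp_map_path)
  obtain N G where G: "map_path V E G N (\<lambda>_. i) id"
    using map_path_append[OF G1 G2] by blast
  define \<psi> where "\<psi> u = G (min (length u) N) (\<phi> u)" for u
  have "is_hom r V E \<psi>"
    unfolding \<psi>_def using map_path_is_hom[OF G \<phi> \<open>symp E\<close>] .
  moreover have "\<psi> u = \<phi> u" if "tsite r u" "length u = Suc N" for u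
    using G \<phi> that unfolding \<psi>_def map_path_def is_hom_def by simp
  moreover have "\<psi> [] = i"
    using G \<phi> tsite_Nil unfolding \<psi>_def map_path_def is_hom_def by simp
  ultimately show False
    using no_extension[of "Suc N"] by auto
qed

subsection \<open>Stiff retracts\<close>

definition stiff :: "'a set \<Rightarrow> ('a \<Rightarrow> 'a \<Rightarrow> bool) \<Rightarrow> bool" where
  "stiff V E \<longleftrightarrow> (\<forall>i\<in>V. \<forall>j\<in>V. i \<noteq> j \<longrightarrow> \<not> nbhd V E i \<subseteq> nbhd V E j)"

lemma stiff_nbhd_nonempty:
  assumes "stiff V E" "x \<in> V" "y \<in> V" "x \<noteq> y"
  shows "nbhd V E x \<noteq> {}"
  using assms unfolding stiff_def by blast

lemma exists_stiff_retraction: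
  assumes "finite V" "symp E" "\<not> dismantlable E V"
  shows "\<exists>W \<rho>. retraction V E W \<rho> \<and> stiff W E \<and> \<not> dismantlable E W"
  using assms(1,3)
proof (induction "card V" arbitrary: V rule: less_induct)
  case less
  show ?case
  proof (cases "stiff V E")
    case True
    then show ?thesis using less.prems retraction_id by blast
  next
    case False
    then obtain a b where ab: "a \<in> V" "b \<in> V" "a \<noteq> b" "nbhd V E a \<subseteq> nbhd V E b"
      unfolding stiff_def by blast
    then have "\<not> dismantlable E (V - {a})"
      using less.prems dism_fold by metis
    moreover have "card (V - {a}) < card V"
      using less.prems ab by (meson card_Diff1_less)
    ultimately obtain W \<rho> where "retraction (V - {a}) E W \<rho>" "stiff W E" "\<not> dismantlable E W"
      using less.hyps less.prems by (meson finite_Diff)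
    moreover have "retraction V E (V - {a}) (id(a := b))"
      using ab \<open>symp E\<close> by (intro fold_retraction) auto
    ultimately show ?thesis
      using retraction_trans by blast
  qed
qed

lemma stiff_retraction_rigid:
  assumes "stiff W E" and \<rho>: "retraction V E W \<rho>" and \<psi>: "is_hom r V E \<psi>"
    and \<phi>: "\<And>u. \<phi> u \<in> W"
    and children: "\<And>u. tsite r u \<Longrightarrow> nbhd W E (\<phi> u) \<subseteq> (\<lambda>a. \<phi> (u @ [a])) ` {..<r}"
    and agree: "\<And>u. tsite r u \<Longrightarrow> length u = n \<Longrightarrow> \<rho> (\<psi> u) = \<phi> u"
  shows "tsite r u \<Longrightarrow> length u \<le> n \<Longrightarrow> \<rho> (\<psi> u) = \<phi> u"
proof (induction "n - length u" arbitrary: u)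
  case 0
  then show ?case using agree by simp
next
  case (Suc m)
  have "nbhd W E (\<phi> u) \<subseteq> nbhd W E (\<rho> (\<psi> u))"
  proof
    fix z assume z: "z \<in> nbhd W E (\<phi> u)"
    then obtain a where "a < r" and z_child: "z = \<phi> (u @ [a])"
      using children Suc.prems by blast
    then have child: "tsite r (u @ [a])"
      using tsite_snoc Suc.prems by blast
    then have "\<rho> (\<psi> (u @ [a])) = z"
      using Suc z_child by simp
    moreover note is_hom_snoc[OF \<psi> child]
    ultimately have "E (\<rho> (\<psi> u)) z"
      using \<rho> unfolding retraction_def by metis
    then show "z \<in> nbhd W E (\<rho> (\<psi> u))"
      using z unfolding nbhd_def by simp
  qed
  moreover have "\<rho> (\<psi> u) \<in> W"
    using \<rho> \<psi> Suc.prems unfolding retraction_def is_hom_def by blast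
  ultimately show ?case
    using \<open>stiff W E\<close> \<phi> unfolding stiff_def by metis
qed

lemma finite_set_enumeration:
  assumes "finite S" "S \<noteq> {}" "card S \<le> r"
  obtains h :: "nat \<Rightarrow> 'a" where "range h \<subseteq> S" "S \<subseteq> h ` {..<r}"
proof -
  obtain xs where xs: "set xs = S" "length xs = card S"
    using assms(1) by (metis distinct_card finite_distinct_list)
  let ?h = "\<lambda>a. if a < length xs then xs ! a else hd xs"
  have "range ?h \<subseteq> S"
    using xs assms(2) by (auto simp: hd_in_set)
  moreover have "S \<subseteq> ?h ` {..<r}"
  proof
    fix z assume "z \<in> S"
    then obtain a where "a < length xs" "xs ! a = z"
      using xs(1) in_set_conv_nth by metis
    then show "z \<in> ?h ` {..<r}"
      using xs(2) assms(3) by (intro image_eqI[of _ _ a]) auto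
  qed
  ultimately show thesis using that by blast
qed

lemma nondismantlable_long_range_action:
  assumes "symp E" "finite V" "V \<noteq> {}" "\<not> dismantlable E V"
  shows "long_range_action (card V) V E"
proof -
  obtain W \<rho> where \<rho>: "retraction V E W \<rho>" and "stiff W E" and "\<not> dismantlable E W"
    using exists_stiff_retraction assms by blast
  obtain x0 where "x0 \<in> W"
    using \<rho> assms(3) unfolding retraction_def by blast
  moreover have "W \<noteq> {x0}"
    using \<open>\<not> dismantlable E W\<close> dism_single by metis
  ultimately obtain i where "i \<in> W" "i \<noteq> x0"
    by blast
  have "\<exists>h. range h \<subseteq> nbhd W E x \<and> nbhd W E x \<subseteq> h ` {..<card V}" if "x \<in> W" for x
  proof -
    have "nbhd W E x \<noteq> {}"
      using stiff_nbhd_nonempty[OF \<open>stiff W E\<close> that] \<open>x0 \<in> W\<close> \<open>i \<in> W\<close> \<open>i \<noteq> x0\<close> by metis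
    moreover have "nbhd W E x \<subseteq> V"
      using \<rho> unfolding retraction_def nbhd_def by auto
    ultimately show ?thesis
      using finite_set_enumeration card_mono assms(2) finite_subset by metis
  qed
  then obtain en where en: "\<And>x. x \<in> W \<Longrightarrow> range (en x) \<subseteq> nbhd W E x"
    "\<And>x. x \<in> W \<Longrightarrow> nbhd W E x \<subseteq> en x ` {..<card V}"
    by metis
  define \<phi> where "\<phi> = foldl en x0"
  have \<phi>_snoc: "\<phi> (u @ [a]) = en (\<phi> u) a" for u a
    unfolding \<phi>_def by simp
  have \<phi>_W: "\<phi> u \<in> W" for u
    by (induction u rule: rev_induct)
      (use \<open>x0 \<in> W\<close> en(1) in \<open>auto simp: \<phi>_def nbhd_def subset_iff\<close>)
  have \<phi>_edge: "E (\<phi> u) (\<phi> (u @ [a]))" for u a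
    using en(1)[OF \<phi>_W] unfolding \<phi>_snoc nbhd_def by blast
  have children: "nbhd W E (\<phi> u) \<subseteq> (\<lambda>a. \<phi> (u @ [a])) ` {..<card V}" for u
    using en(2)[OF \<phi>_W] unfolding \<phi>_snoc .
  have "is_hom (card V) V E \<phi>"
    using \<phi>_W \<phi>_edge \<rho> \<open>symp E\<close> unfolding retraction_def by (intro is_homI) auto
  moreover have "\<not> (\<exists>\<psi>. is_hom (card V) V E \<psi> \<and> (\<forall>u. tsite (card V) u \<and> length u = n \<longrightarrow> \<psi> u = \<phi> u)
                        \<and> \<psi> [] = i)" for n
  proof
    assume "\<exists>\<psi>. is_hom (card V) V E \<psi> \<and> (\<forall>u. tsite (card V) u \<and> length u = n \<longrightarrow> \<psi> u = \<phi> u)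
                  \<and> \<psi> [] = i"
    then obtain \<psi> where \<psi>: "is_hom (card V) V E \<psi>" "\<psi> [] = i"
      and agree: "\<And>u. tsite (card V) u \<Longrightarrow> length u = n \<Longrightarrow> \<psi> u = \<phi> u"
      by blast
    have agree_W: "\<rho> (\<psi> u) = \<phi> u" if "tsite (card V) u" "length u = n" for u
      using agree[OF that] \<phi>_W \<rho> unfolding retraction_def by simp
    have "\<rho> (\<psi> []) = \<phi> []"
      using stiff_retraction_rigid[OF \<open>stiff W E\<close> \<rho> \<psi>(1) \<phi>_W children agree_W tsite_Nil]
      by simp
    then show False
      using \<psi>(2) \<open>i \<in> W\<close> \<open>i \<noteq> x0\<close> \<rho> unfolding \<phi>_def retraction_def by simp
  qed
  moreover have "i \<in> V"
    using \<open>i \<in> W\<close> \<rho> unfolding retraction_def by blast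
  ultimately show ?thesis
    unfolding long_range_action_def by blast
qed

theorem mainTheorem10:
  fixes V :: "'a set" and E :: "'a \<Rightarrow> 'a \<Rightarrow> bool"
  assumes "graph V E" and "finite V" and "connected_graph V E"
    and "\<exists>i j. E i j"
  shows "(\<forall>r::nat. r \<ge> 1 \<longrightarrow> \<not> long_range_action r V E) \<longleftrightarrow> dismantlable E V"
proof
  assume no_lra: "\<forall>r::nat. r \<ge> 1 \<longrightarrow> \<not> long_range_action r V E"
  have "V \<noteq> {}"
    using assms(3) unfolding connected_graph_def by blast
  then have "card V \<ge> 1"
    using assms(2) by (simp add: Suc_leI card_gt_0_iff)
  then show "dismantlable E V"
    using no_lra nondismantlable_long_range_action[OF graph_symp[OF assms(1)] assms(2) \<open>V \<noteq> {}\<close>]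
    by blast
next
  assume "dismantlable E V"
  then show "\<forall>r::nat. r \<ge> 1 \<longrightarrow> \<not> long_range_action r V E"
    using dismantlable_no_long_range_action[OF graph_symp[OF assms(1)] assms(3)] by blast
qed

end
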